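(* Let $A, B\in\mathbb{R}^{m\times n}$ with $m < n$, $b\in\mathbb{R}^m$, and $s\in\{-1, 1\}^n$. Let $A = M_A - N_A$ with $\operatorname{rank}(M_A) = m$. (a) Let $1\le p\le\infty$. If $\operatorname{diag}(s)M_A^\dagger b \geq 0$, $\operatorname{diag}(s)M_A^\dagger [N_A\operatorname{diag}(s) + B] \geq 0$ and $\|M_A^\dagger[N_A\operatorname{diag}(s) + B]\|_p< 1$, then there exists a nonnegative solution $y_*$ of the linear system $[A\operatorname{diag}(s)-B]y=b$ such that $x_* = \operatorname{diag}(s)y_*$ is a solution of $Ax-B|x|=b$. (b) If $\operatorname{diag}(s)M_A^\dagger b > 0$ and $\|M_A^\dagger [N_A \operatorname{diag}(s) + B]\|_{\infty} < \gamma/2$, where $\gamma = \dfrac{\min_i |(M_A^\dagger b)_i|}{\max_i |(M_A^\dagger b)_i|}$, then $Ax-B|x|=b$ has infinitely many solutions with the sign pattern $s$.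
   Context: $M^\dagger$ is the Moore–Penrose inverse; $|x|$ is the entrywise absolute value; $\operatorname{diag}(s)$ is the diagonal matrix with diagonal $s$. Vector/matrix inequalities are entrywise. $\|\cdot\|_p$ on matrices is the operator norm induced by the vector $p$-norm. A vector $x$ has sign pattern $s$ if $\operatorname{sign}(x_{(i)})=s_{(i)}$ for all $i$. *)

theory Defs
  imports "HOL-Analysis.Analysis"
begin

definition diagm :: "real^'n \<Rightarrow> real^'n^'n" where
  "diagm s = (\<chi> i j. if i = j then s$i else 0)"

definition vabs :: "real^'n \<Rightarrow> real^'n" where
  "vabs x = (\<chi> i. \<bar>x$i\<bar>)"

definition mp_inverse :: "real^'n^'m \<Rightarrow> real^'m^'n" where
  "mp_inverse M = (THE X. M ** X ** M = M \<and> X ** M ** X = X \<and>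
      transpose (M ** X) = M ** X \<and> transpose (X ** M) = X ** M)"

definition vec_pnorm :: "ereal \<Rightarrow> real^'n \<Rightarrow> real" where
  "vec_pnorm p x = (if p = \<infinity> then Max (range (\<lambda>i. \<bar>x$i\<bar>))
     else (\<Sum>i\<in>UNIV. \<bar>x$i\<bar> powr real_of_ereal p) powr (1 / real_of_ereal p))"

definition mat_pnorm :: "ereal \<Rightarrow> real^'n^'m \<Rightarrow> real" where
  "mat_pnorm p A = Sup {vec_pnorm p (A *v x) | x. vec_pnorm p x = 1}"

end

(* Write D = diag(s), c = M_A^+ b and K = D M_A^+ (N_A D + B).
   Multiplying by D does not change p-norms, so ||K||_p < 1 and the fixed point exists.
   (a) If K >= 0 and D c >= 0, the negative part z of y satisfies z <= K z, which a
   contraction only allows for z = 0.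
   (b) In the sup norm ||y|| <= max|c| / (1 - ||K||), which under the bound on ||K|| keeps
   |(K y)_i| below min|c| <= (D c)_i, so y > 0. As m < n, A D - B has a nonzero null vector k,
   and y + t k stays positive for all small t: infinitely many solutions with sign pattern s. *)

theory Submission
  imports Defs
begin

lemma ereal_ge_1_cases:
  assumes "1 \<le> (p::ereal)"
  obtains "p = \<infinity>" | r where "p = ereal r" "1 \<le> r"
  using assms by (cases p) auto

lemma component_le_vec_pnorm:
  fixes x :: "real^'n"
  assumes "1 \<le> p"
  shows "\<bar>x$i\<bar> \<le> vec_pnorm p x"
  using assms
proof (cases rule: ereal_ge_1_cases)
  case 1
  then show ?thesis by (simp add: vec_pnorm_def)
next
  case (2 r)
  have "\<bar>x$i\<bar> powr r \<le> (\<Sum>j\<in>UNIV. \<bar>x$j\<bar> powr r)"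
    by (rule member_le_sum) auto
  then have "(\<bar>x$i\<bar> powr r) powr (1/r) \<le> (\<Sum>j\<in>UNIV. \<bar>x$j\<bar> powr r) powr (1/r)"
    using 2 by (intro powr_mono2) auto
  with 2 show ?thesis by (simp add: vec_pnorm_def powr_powr)
qed

lemma vec_pnorm_nonneg: "1 \<le> p \<Longrightarrow> 0 \<le> vec_pnorm p (x::real^'n)"
  using component_le_vec_pnorm abs_ge_zero order_trans by blast

lemma vec_pnorm_pos:
  fixes x :: "real^'n"
  assumes "1 \<le> p" "x \<noteq> 0"
  shows "0 < vec_pnorm p x"
proof -
  obtain i where "x$i \<noteq> 0" using \<open>x \<noteq> 0\<close> by (auto simp: vec_eq_iff)
  then show ?thesis using component_le_vec_pnorm[OF \<open>1 \<le> p\<close>, of x i] by simp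
qed

lemma vec_pnorm_mono:
  fixes x y :: "real^'n"
  assumes "1 \<le> p" and le: "\<And>i. \<bar>x$i\<bar> \<le> \<bar>y$i\<bar>"
  shows "vec_pnorm p x \<le> vec_pnorm p y"
  using assms(1)
proof (cases rule: ereal_ge_1_cases)
  case 1
  have "\<bar>x$i\<bar> \<le> Max (range (\<lambda>i. \<bar>y$i\<bar>))" for i
  proof -
    have "\<bar>y$i\<bar> \<le> Max (range (\<lambda>i. \<bar>y$i\<bar>))" by (rule Max_ge) auto
    with le[of i] show ?thesis by linarith
  qed
  with 1 show ?thesis by (simp add: vec_pnorm_def Max_le_iff)
next
  case (2 r)
  have "(\<Sum>j\<in>UNIV. \<bar>x$j\<bar> powr r) \<le> (\<Sum>j\<in>UNIV. \<bar>y$j\<bar> powr r)"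
    using 2 le by (intro sum_mono powr_mono2) auto
  with 2 show ?thesis by (simp add: vec_pnorm_def powr_mono2 sum_nonneg)
qed

lemma vec_pnorm_cong: "(\<And>i. \<bar>x$i\<bar> = \<bar>y$i\<bar>) \<Longrightarrow> vec_pnorm p x = vec_pnorm p y"
  by (simp add: vec_pnorm_def)

lemma vec_pnorm_scaleR:
  fixes x :: "real^'n"
  assumes "1 \<le> p"
  shows "vec_pnorm p (c *\<^sub>R x) = \<bar>c\<bar> * vec_pnorm p x"
  using assms
proof (cases rule: ereal_ge_1_cases)
  case 1
  have "mono (\<lambda>t. \<bar>c\<bar> * t)" by (simp add: mono_def mult_left_mono)
  moreover have "range (\<lambda>i. \<bar>(c *\<^sub>R x)$i\<bar>) = (\<lambda>t. \<bar>c\<bar> * t) ` range (\<lambda>i. \<bar>x$i\<bar>)"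
    by (auto simp: abs_mult image_image)
  ultimately show ?thesis
    using 1 mono_Max_commute[of "\<lambda>t. \<bar>c\<bar> * t" "range (\<lambda>i. \<bar>x$i\<bar>)"]
    by (simp add: vec_pnorm_def)
next
  case (2 r)
  have "(\<Sum>j\<in>UNIV. \<bar>(c *\<^sub>R x)$j\<bar> powr r) = \<bar>c\<bar> powr r * (\<Sum>j\<in>UNIV. \<bar>x$j\<bar> powr r)"
    by (simp add: abs_mult powr_mult sum_distrib_left)
  with 2 show ?thesis by (simp add: vec_pnorm_def powr_mult powr_powr)
qed

lemma vec_pnorm_zero: "1 \<le> p \<Longrightarrow> vec_pnorm p 0 = 0"
  using vec_pnorm_scaleR[of p 0 0] by simp

lemma bdd_above_mat_pnorm:
  fixes T :: "real^'n^'m"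
  assumes p: "1 \<le> p"
  shows "bdd_above {vec_pnorm p (T *v x) | x. vec_pnorm p x = 1}"
proof -
  define C :: "real^'m" where "C = (\<chi> i. \<Sum>j\<in>UNIV. \<bar>T$i$j\<bar>)"
  have "vec_pnorm p (T *v x) \<le> vec_pnorm p C" if "vec_pnorm p x = 1" for x
  proof (rule vec_pnorm_mono[OF p])
    fix i
    have "\<bar>(T *v x)$i\<bar> \<le> (\<Sum>j\<in>UNIV. \<bar>T$i$j * x$j\<bar>)"
      unfolding matrix_vector_mult_def by simp
    also have "\<dots> \<le> (\<Sum>j\<in>UNIV. \<bar>T$i$j\<bar>)"
      using component_le_vec_pnorm[OF p, of x] that
      by (intro sum_mono) (simp add: abs_mult mult_left_le)
    finally show "\<bar>(T *v x)$i\<bar> \<le> \<bar>C$i\<bar>" by (simp add: C_def sum_nonneg)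
  qed
  then show ?thesis by (auto simp: bdd_above_def)
qed

lemma vec_pnorm_matrix_vector_le:
  fixes T :: "real^'n^'m"
  assumes p: "1 \<le> p"
  shows "vec_pnorm p (T *v v) \<le> mat_pnorm p T * vec_pnorm p v"
proof (cases "v = 0")
  case True
  then show ?thesis by (simp add: vec_pnorm_zero[OF p])
next
  case False
  define n where "n = vec_pnorm p v"
  have n: "0 < n" using vec_pnorm_pos[OF p False] by (simp add: n_def)
  have "vec_pnorm p ((1/n) *\<^sub>R v) = 1"
    using vec_pnorm_scaleR[OF p, of "1/n" v] n by (simp add: n_def)
  then have "vec_pnorm p (T *v ((1/n) *\<^sub>R v)) \<le> mat_pnorm p T"
    unfolding mat_pnorm_def by (intro cSup_upper bdd_above_mat_pnorm[OF p]) auto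
  with n show ?thesis
    using vec_pnorm_scaleR[OF p, of "1/n" "T *v v"]
    by (simp add: matrix_vector_mult_scaleR n_def divide_le_eq mult.commute)
qed

lemma mat_pnorm_nonneg:
  fixes T :: "real^'n^'m"
  assumes p: "1 \<le> p"
  shows "0 \<le> mat_pnorm p T"
proof -
  define v :: "real^'n" where "v = (\<chi> i. 1)"
  have "0 < vec_pnorm p v" by (intro vec_pnorm_pos[OF p]) (simp add: v_def vec_eq_iff)
  moreover have "0 \<le> mat_pnorm p T * vec_pnorm p v"
    using vec_pnorm_matrix_vector_le[OF p] vec_pnorm_nonneg[OF p] order_trans by blast
  ultimately show ?thesis by (simp add: zero_le_mult_iff)
qed

lemma contraction_dominated_eq_0:
  fixes K :: "real^'n^'n"
  assumes p: "1 \<le> p" and "mat_pnorm p K < 1" and "\<And>i. \<bar>v$i\<bar> \<le> \<bar>(K *v v)$i\<bar>"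
  shows "v = 0"
proof (rule ccontr)
  assume "v \<noteq> 0"
  then have "0 < vec_pnorm p v" by (rule vec_pnorm_pos[OF p])
  have "vec_pnorm p v \<le> vec_pnorm p (K *v v)" by (rule vec_pnorm_mono[OF p assms(3)])
  also have "\<dots> \<le> mat_pnorm p K * vec_pnorm p v" by (rule vec_pnorm_matrix_vector_le[OF p])
  also have "\<dots> < vec_pnorm p v" using \<open>0 < vec_pnorm p v\<close> assms(2) by simp
  finally show False by simp
qed

lemma contraction_fixed_point_exists:
  fixes K :: "real^'n^'n"
  assumes p: "1 \<le> p" and q: "mat_pnorm p K < 1"
  obtains y where "y = d + K *v y"
proof -
  have "v = 0" if "(mat 1 - K) *v v = 0" for v
    using that by (intro contraction_dominated_eq_0[OF p q]) (simp add: matrix_vector_mult_diff_rdistrib)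
  then obtain L where "L ** (mat 1 - K) = mat 1"
    using matrix_left_invertible_ker by blast
  then have "(mat 1 - K) ** L = mat 1"
    using matrix_left_right_inverse by blast
  then have "(mat 1 - K) *v (L *v d) = d"
    by (metis matrix_vector_mul_assoc matrix_vector_mul_lid)
  then show ?thesis
    by (intro that[of "L *v d"]) (simp add: matrix_vector_mult_diff_rdistrib algebra_simps)
qed

lemma nonneg_matrix_vector_mono:
  fixes K :: "real^'n^'m"
  assumes "\<And>i j. 0 \<le> K$i$j" and "\<And>j. u$j \<le> w$j"
  shows "(K *v u)$i \<le> (K *v w)$i"
  unfolding matrix_vector_mult_def using assms by (simp add: sum_mono mult_left_mono)

lemma contraction_fixed_point_nonneg:
  fixes K :: "real^'n^'n"
  assumes p: "1 \<le> p" and q: "mat_pnorm p K < 1"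
    and K_nonneg: "\<And>i j. 0 \<le> K$i$j" and d_nonneg: "\<And>i. 0 \<le> d$i"
    and y: "y = d + K *v y"
  shows "0 \<le> y$i"
proof -
  define z where "z = (\<chi> i. max 0 (- y$i))"
  have z_nonneg: "0 \<le> z$j" for j by (simp add: z_def)
  have z_le: "z$j \<le> (K *v z)$j" for j
  proof (cases "0 \<le> y$j")
    case True
    then show ?thesis
      using nonneg_matrix_vector_mono[OF K_nonneg, of 0 z j] z_nonneg by (simp add: z_def)
  next
    case False
    have "z$j = - d$j - (K *v y)$j"
      using False arg_cong[OF y, of "\<lambda>v. v$j"] by (simp add: z_def)
    also have "\<dots> \<le> (K *v (- y))$j"
      using d_nonneg[of j] by (simp add: matrix_vector_mult_def sum_negf)
    also have "\<dots> \<le> (K *v z)$j"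
      by (rule nonneg_matrix_vector_mono[OF K_nonneg]) (simp add: z_def)
    finally show ?thesis .
  qed
  have "\<bar>z$j\<bar> \<le> \<bar>(K *v z)$j\<bar>" for j
    using z_le[of j] z_nonneg[of j] by linarith
  then have "z = 0" by (rule contraction_dominated_eq_0[OF p q])
  then have "max 0 (- y$i) = 0" by (simp add: z_def vec_eq_iff)
  then show ?thesis by linarith
qed

lemma contraction_fixed_point_pos:
  fixes K :: "real^'n^'n"
  assumes d_pos: "\<And>i. 0 < d$i"
    and q: "mat_pnorm \<infinity> K < Min (range (($) d)) / Max (range (($) d)) / 2"
  obtains y where "y = d + K *v y" and "\<And>i. 0 < y$i"
proof -
  define mn where "mn = Min (range (($) d))"
  define mx where "mx = Max (range (($) d))"
  define \<kappa> where "\<kappa> = mat_pnorm \<infinity> K"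
  have p: "1 \<le> (\<infinity>::ereal)" by simp
  have mn_le: "mn \<le> d$i" for i unfolding mn_def by (rule Min_le) auto
  have le_mx: "d$i \<le> mx" for i unfolding mx_def by (rule Max_ge) auto
  have "mn \<in> range (($) d)" unfolding mn_def by (rule Min_in) auto
  then have mn_pos: "0 < mn" using d_pos by auto
  have mn_le_mx: "mn \<le> mx" using mn_le le_mx order_trans by blast
  have \<kappa>_nonneg: "0 \<le> \<kappa>" unfolding \<kappa>_def by (rule mat_pnorm_nonneg[OF p])
  have "\<kappa> < mn / mx / 2" using q by (simp add: \<kappa>_def mn_def mx_def)
  then have \<kappa>_mx: "2 * \<kappa> * mx < mn"
    using mn_pos mn_le_mx by (simp add: field_simps)
  then have "\<kappa> < 1" using mn_le_mx mn_pos by (smt (verit) mult_le_cancel_right1)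
  then obtain y where y: "y = d + K *v y"
    using contraction_fixed_point_exists[OF p] by (auto simp: \<kappa>_def)
  define Y where "Y = vec_pnorm \<infinity> y"
  have Ky: "\<bar>(K *v y)$i\<bar> \<le> \<kappa> * Y" for i
    using component_le_vec_pnorm[OF p, of "K *v y" i] vec_pnorm_matrix_vector_le[OF p, of K y]
    by (simp add: \<kappa>_def Y_def)
  have y_nth: "y$i = d$i + (K *v y)$i" for i
    using arg_cong[OF y, of "\<lambda>v. v$i"] by simp
  have "\<bar>y$i\<bar> \<le> mx + \<kappa> * Y" for i
    using y_nth[of i] le_mx[of i] d_pos[of i] Ky[of i] by linarith
  then have "Y \<le> mx + \<kappa> * Y" by (simp add: Y_def vec_pnorm_def)
  \<comment> \<open>\<open>\<kappa> Y (1 - \<kappa>) \<le> \<kappa> mx < mn (1 - \<kappa>)\<close> because \<open>\<kappa> (mx + mn) \<le> 2 \<kappa> mx < mn\<close>\<close>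
  then have "Y * (1 - \<kappa>) \<le> mx" by (simp add: algebra_simps)
  then have "\<kappa> * (Y * (1 - \<kappa>)) \<le> \<kappa> * mx" using \<kappa>_nonneg by (rule mult_left_mono)
  also have "\<dots> < mn * (1 - \<kappa>)"
    using \<kappa>_mx mult_left_mono[OF mn_le_mx \<kappa>_nonneg] by (simp add: algebra_simps)
  finally have "(\<kappa> * Y) * (1 - \<kappa>) < mn * (1 - \<kappa>)" by (simp only: mult.assoc)
  then have "\<kappa> * Y < mn" using \<open>\<kappa> < 1\<close> by simp
  then have "0 < y$i" for i
    using y_nth[of i] mn_le[of i] Ky[of i] by linarith
  with y show ?thesis by (rule that)
qed

definition penrose_conditions :: "real^'n^'m \<Rightarrow> real^'m^'n \<Rightarrow> bool" where
  "penrose_conditions M X \<longleftrightarrow> M ** X ** M = M \<and> X ** M ** X = X \<and>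
      transpose (M ** X) = M ** X \<and> transpose (X ** M) = X ** M"

lemma penrose_conditions_unique:
  assumes "penrose_conditions M X" and "penrose_conditions M Y"
  shows "X = Y"
proof -
  have X: "M ** X ** M = M" "X ** M ** X = X" "transpose (M ** X) = M ** X" "transpose (X ** M) = X ** M"
    and Y: "M ** Y ** M = M" "Y ** M ** Y = Y" "transpose (M ** Y) = M ** Y" "transpose (Y ** M) = Y ** M"
    using assms by (simp_all add: penrose_conditions_def)
  have MX: "M ** X = M ** Y"
  proof -
    have "M ** X = transpose (M ** Y ** M ** X)" using X(3) Y(1) by simp
    also have "\<dots> = transpose (M ** X) ** transpose (M ** Y)"
      by (simp add: matrix_transpose_mul matrix_mul_assoc)
    also have "\<dots> = M ** Y" using X(1,3) Y(3) by (simp add: matrix_mul_assoc)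
    finally show ?thesis .
  qed
  have XM: "X ** M = Y ** M"
  proof -
    have "X ** M = transpose (X ** (M ** Y ** M))" using X(4) Y(1) by simp
    also have "\<dots> = transpose (Y ** M) ** transpose (X ** M)"
      by (simp add: matrix_transpose_mul matrix_mul_assoc)
    also have "\<dots> = Y ** (M ** X ** M)" using X(4) Y(4) by (simp add: matrix_mul_assoc)
    also have "\<dots> = Y ** M" using X(1) by simp
    finally show ?thesis .
  qed
  have "X = X ** (M ** Y)" using X(2) MX by (simp flip: matrix_mul_assoc)
  also have "\<dots> = Y" using XM Y(2) by (simp add: matrix_mul_assoc)
  finally show ?thesis .
qed

lemma mp_inverse_eqI: "penrose_conditions M X \<Longrightarrow> mp_inverse M = X"
  unfolding mp_inverse_def penrose_conditions_def[symmetric]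
  using penrose_conditions_unique by blast

lemma gram_matrix_inverse:
  fixes M :: "real^'n^'m"
  assumes "rank M = CARD('m)"
  obtains G where "(M ** transpose M) ** G = mat 1" and "transpose G = G"
proof -
  have "v = 0" if "(M ** transpose M) *v v = 0" for v
  proof -
    have "(transpose M *v v) \<bullet> (transpose M *v v) = v \<bullet> ((M ** transpose M) *v v)"
      by (simp add: dot_lmul_matrix flip: matrix_vector_mul_assoc)
    then have "transpose M *v v = 0" using that by simp
    moreover have "inj ((*v) (transpose M))"
      using assms by (simp add: rank_transpose flip: full_rank_injective)
    ultimately show "v = 0" by (metis inj_eq matrix_vector_mult_0_right)
  qed
  then obtain G where G: "G ** (M ** transpose M) = mat 1"
    using matrix_left_invertible_ker by blast
  then have "transpose G = G ** (M ** transpose M) ** transpose G" by simp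
  also have "\<dots> = G ** transpose (G ** (M ** transpose M))"
    by (simp add: matrix_transpose_mul matrix_mul_assoc)
  also have "\<dots> = G" using G by simp
  finally show ?thesis
    using that G matrix_left_right_inverse by blast
qed

lemma mp_inverse_right_inverse:
  fixes M :: "real^'n^'m"
  assumes "rank M = CARD('m)"
  shows "M ** mp_inverse M = mat 1"
proof -
  obtain G where G: "(M ** transpose M) ** G = mat 1" and G_sym: "transpose G = G"
    using gram_matrix_inverse[OF assms] .
  define X where "X = transpose M ** G"
  have MX: "M ** X = mat 1" using G by (simp add: X_def matrix_mul_assoc)
  have "X ** M ** X = X" by (simp add: MX flip: matrix_mul_assoc)
  moreover have "transpose (X ** M) = X ** M"
    by (simp add: X_def matrix_transpose_mul G_sym matrix_mul_assoc)
  ultimately have "penrose_conditions M X"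
    using MX by (simp add: penrose_conditions_def)
  with MX show ?thesis by (simp add: mp_inverse_eqI)
qed

lemma splitting_fixed_point_solves:
  fixes M N B :: "real^'n^'m" and P :: "real^'m^'n" and D :: "real^'n^'n"
  assumes MP: "M ** P = mat 1" and DD: "D ** D = mat 1"
    and y: "y = D *v (P *v b) + (D ** P ** (N ** D + B)) *v y"
  shows "((M - N) ** D - B) *v y = b"
proof -
  have "D *v y = P *v b + P *v ((N ** D + B) *v y)"
    by (subst y) (simp add: matrix_vector_right_distrib matrix_vector_mul_assoc matrix_mul_assoc DD)
  then have "M *v (D *v y) = b + (N ** D + B) *v y"
    by (simp add: matrix_vector_right_distrib matrix_vector_mul_assoc matrix_mul_assoc MP)
  moreover have "((M - N) ** D - B) *v y = M *v (D *v y) - (N ** D + B) *v y"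
    by (simp add: matrix_vector_mult_diff_rdistrib matrix_vector_mult_add_rdistrib
        flip: matrix_vector_mul_assoc)
  ultimately show ?thesis by simp
qed

lemma diagm_mult_vec_nth: "(diagm s *v u)$i = s$i * u$i"
  unfolding diagm_def matrix_vector_mult_def by (simp add: if_distrib if_distribR sum.delta cong: if_cong)

lemma diagm_sign_mult_self:
  assumes "\<And>i. \<bar>s$i\<bar> = 1"
  shows "diagm s ** diagm s = mat 1"
proof -
  have "s$i * (s$i * x$i) = x$i" for x i
    using assms[of i] abs_mult_self_eq[of "s$i"] by (simp add: mult.assoc[symmetric])
  then show ?thesis
    by (simp add: matrix_eq vec_eq_iff diagm_mult_vec_nth flip: matrix_vector_mul_assoc)
qed

lemma mat_pnorm_diagm_sign_mult:
  assumes "\<And>i. \<bar>s$i\<bar> = 1"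
  shows "mat_pnorm p (diagm s ** T) = mat_pnorm p T"
proof -
  have "vec_pnorm p ((diagm s ** T) *v x) = vec_pnorm p (T *v x)" for x
    using assms
    by (intro vec_pnorm_cong) (simp add: diagm_mult_vec_nth abs_mult flip: matrix_vector_mul_assoc)
  then show ?thesis by (simp add: mat_pnorm_def)
qed

lemma absolute_value_equation_of_nonneg_solution:
  assumes s: "\<And>i. \<bar>s$i\<bar> = 1" and z_nonneg: "\<And>i. 0 \<le> z$i"
    and sol: "(A ** diagm s - B) *v z = b"
  shows "A *v (diagm s *v z) - B *v vabs (diagm s *v z) = b"
proof -
  have "vabs (diagm s *v z) = z"
    using s z_nonneg by (simp add: vabs_def vec_eq_iff diagm_mult_vec_nth abs_mult)
  with sol show ?thesis
    by (simp add: matrix_vector_mult_diff_rdistrib matrix_vector_mul_assoc)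
qed

lemma sgn_diagm_mult_vec_nth:
  assumes "\<bar>s$i\<bar> = 1" and "0 < z$i"
  shows "sgn ((diagm s *v z)$i) = s$i"
  using assms by (simp add: diagm_mult_vec_nth sgn_mult sgn_if abs_if split: if_splits)

lemma exists_nonzero_null_vector:
  fixes C :: "real^'n^'m"
  assumes "CARD('m) < CARD('n)"
  obtains k where "k \<noteq> 0" and "C *v k = 0"
proof -
  have "\<not> inj ((*v) C)"
    using rank_bound[of C] assms full_rank_injective[of C] by linarith
  then show ?thesis
    using that matrix_left_invertible_ker matrix_left_invertible_injective by blast
qed

lemma infinite_positive_solutions:
  fixes C :: "real^'n^'m"
  assumes "CARD('m) < CARD('n)" and sol: "C *v y = b" and y_pos: "\<And>i. 0 < y$i"
  shows "infinite {z. C *v z = b \<and> (\<forall>i. 0 < z$i)}"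
proof -
  obtain k where "k \<noteq> 0" and k: "C *v k = 0"
    using exists_nonzero_null_vector[OF assms(1)] .
  define S where "S = (\<Inter>i. {t::real. 0 < y$i + t * k$i})"
  have "open S" unfolding S_def
    by (intro open_INT ballI open_Collect_less continuous_intros) auto
  moreover have "0 \<in> S" using y_pos by (simp add: S_def)
  ultimately obtain e where "e > 0" and "ball 0 e \<subseteq> S"
    using open_contains_ball by blast
  moreover have "{0<..<e} \<subseteq> ball 0 e" by (auto simp: dist_real_def)
  ultimately have "infinite S"
    by (metis infinite_Ioo infinite_super)
  moreover have "inj_on (\<lambda>t. y + t *\<^sub>R k) S"
    using \<open>k \<noteq> 0\<close> by (intro inj_onI) simp
  moreover have "(\<lambda>t. y + t *\<^sub>R k) ` S \<subseteq> {z. C *v z = b \<and> (\<forall>i. 0 < z$i)}"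
    using sol k by (auto simp: S_def matrix_vector_right_distrib matrix_vector_mult_scaleR)
  ultimately show ?thesis
    using finite_imageD infinite_super by blast
qed

lemma infinite_sign_pattern_solutions:
  fixes A B :: "real^'n^'m"
  assumes "CARD('m) < CARD('n)" and s: "\<And>i. \<bar>s$i\<bar> = 1"
    and "(A ** diagm s - B) *v y = b" and "\<And>i. 0 < y$i"
  shows "infinite {x. A *v x - B *v vabs x = b \<and> (\<forall>i. sgn (x$i) = s$i)}"
proof -
  define Z where "Z = {z. (A ** diagm s - B) *v z = b \<and> (\<forall>i. 0 < z$i)}"
  have "inj ((*v) (diagm s))"
    by (rule inj_on_inverseI[of _ "(*v) (diagm s)"])
      (simp add: matrix_vector_mul_assoc diagm_sign_mult_self[OF s])
  then have "infinite ((*v) (diagm s) ` Z)"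
    using infinite_positive_solutions[OF assms(1,3,4)]
    by (simp add: Z_def finite_image_iff inj_on_subset)
  moreover have "(*v) (diagm s) ` Z \<subseteq> {x. A *v x - B *v vabs x = b \<and> (\<forall>i. sgn (x$i) = s$i)}"
    using absolute_value_equation_of_nonneg_solution[OF s] sgn_diagm_mult_vec_nth[OF s]
    by (fastforce simp: Z_def less_imp_le)
  ultimately show ?thesis
    using infinite_super by blast
qed

lemma splitting_nonneg_solution:
  fixes M N B :: "real^'n^'m" and P :: "real^'m^'n"
  assumes MP: "M ** P = mat 1" and s: "\<And>i. \<bar>s$i\<bar> = 1" and p: "1 \<le> p"
    and c_nonneg: "\<And>i. 0 \<le> (diagm s *v (P *v b))$i"
    and K_nonneg: "\<And>i j. 0 \<le> (diagm s ** P ** (N ** diagm s + B))$i$j"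
    and q: "mat_pnorm p (P ** (N ** diagm s + B)) < 1"
  shows "\<exists>y. (\<forall>i. 0 \<le> y$i) \<and> ((M - N) ** diagm s - B) *v y = b"
proof -
  let ?K = "diagm s ** P ** (N ** diagm s + B)"
  have q': "mat_pnorm p ?K < 1"
    using q by (simp add: mat_pnorm_diagm_sign_mult[OF s] flip: matrix_mul_assoc)
  obtain y where y: "y = diagm s *v (P *v b) + ?K *v y"
    using contraction_fixed_point_exists[OF p q'] .
  then have "0 \<le> y$i" for i
    using contraction_fixed_point_nonneg[OF p q' K_nonneg c_nonneg] by blast
  moreover have "((M - N) ** diagm s - B) *v y = b"
    using splitting_fixed_point_solves[OF MP diagm_sign_mult_self[OF s] y] .
  ultimately show ?thesis by blast
qed

lemma splitting_positive_solution:
  fixes M N B :: "real^'n^'m" and P :: "real^'m^'n"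
  assumes MP: "M ** P = mat 1" and s: "\<And>i. \<bar>s$i\<bar> = 1"
    and c_pos: "\<And>i. 0 < (diagm s *v (P *v b))$i"
    and q: "mat_pnorm \<infinity> (P ** (N ** diagm s + B)) <
      Min (range (\<lambda>i. \<bar>(P *v b)$i\<bar>)) / Max (range (\<lambda>i. \<bar>(P *v b)$i\<bar>)) / 2"
  shows "\<exists>y. (\<forall>i. 0 < y$i) \<and> ((M - N) ** diagm s - B) *v y = b"
proof -
  let ?K = "diagm s ** P ** (N ** diagm s + B)" and ?d = "diagm s *v (P *v b)"
  have "\<bar>(P *v b)$i\<bar> = \<bar>?d$i\<bar>" for i by (simp add: diagm_mult_vec_nth abs_mult s)
  then have "\<bar>(P *v b)$i\<bar> = ?d$i" for i using c_pos[of i] by simp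
  then have "range (\<lambda>i. \<bar>(P *v b)$i\<bar>) = range (($) ?d)" by simp
  with q have "mat_pnorm \<infinity> ?K < Min (range (($) ?d)) / Max (range (($) ?d)) / 2"
    by (simp add: mat_pnorm_diagm_sign_mult[OF s] flip: matrix_mul_assoc)
  then obtain y where y: "y = ?d + ?K *v y" and "\<And>i. 0 < y$i"
    using contraction_fixed_point_pos[OF c_pos] by blast
  moreover have "((M - N) ** diagm s - B) *v y = b"
    using splitting_fixed_point_solves[OF MP diagm_sign_mult_self[OF s] y] .
  ultimately show ?thesis by blast
qed

theorem theorem3p6:
  fixes A B M_A N_A :: "real^'n^'m" and b :: "real^'m" and s :: "real^'n"
  assumes mn: "CARD('m) < CARD('n)"
    and s_sign: "\<forall>i. s$i = 1 \<or> s$i = -1"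
    and split: "A = M_A - N_A"
    and rk: "rank M_A = CARD('m)"
  shows
    "(\<forall>p::ereal. 1 \<le> p \<longrightarrow>
        (\<forall>i. (diagm s *v (mp_inverse M_A *v b))$i \<ge> 0) \<longrightarrow>
        (\<forall>i j. (diagm s ** mp_inverse M_A ** (N_A ** diagm s + B))$i$j \<ge> 0) \<longrightarrow>
        mat_pnorm p (mp_inverse M_A ** (N_A ** diagm s + B)) < 1 \<longrightarrow>
        (\<exists>y. (\<forall>i. y$i \<ge> 0) \<and> (A ** diagm s - B) *v y = b \<and>
             A *v (diagm s *v y) - B *v vabs (diagm s *v y) = b))
   \<and>
    ((\<forall>i. (diagm s *v (mp_inverse M_A *v b))$i > 0) \<longrightarrow>
     mat_pnorm \<infinity> (mp_inverse M_A ** (N_A ** diagm s + B)) <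
       (Min (range (\<lambda>i. \<bar>(mp_inverse M_A *v b)$i\<bar>)) /
        Max (range (\<lambda>i. \<bar>(mp_inverse M_A *v b)$i\<bar>))) / 2 \<longrightarrow>
     infinite {x. A *v x - B *v vabs x = b \<and> (\<forall>i. sgn (x$i) = s$i)})"
proof -
  have s: "\<bar>s$i\<bar> = 1" for i using s_sign[rule_format, of i] by auto
  note MP = mp_inverse_right_inverse[OF rk]
  show ?thesis
    unfolding split
  proof (intro conjI allI impI, goal_cases)
    case (1 p)
    then obtain y where "\<forall>i. 0 \<le> y$i" and "((M_A - N_A) ** diagm s - B) *v y = b"
      using splitting_nonneg_solution[OF MP s] by blast
    then show ?case using absolute_value_equation_of_nonneg_solution[OF s] by blast
  next
    case 2
    then obtain y where "\<forall>i. 0 < y$i" and "((M_A - N_A) ** diagm s - B) *v y = b"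
      using splitting_positive_solution[OF MP s] by blast
    then show ?case using infinite_sign_pattern_solutions[OF mn s] by blast
  qed
qed

end
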